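(* Let $\hat q$, $\hat q_\lambda$ be as defined in the context, with $\lambda>0$, and let $\mathcal{C}(x)=\{y\in[C]: s(x,y)\le \hat q\}$ and $\mathcal{C}_\lambda(x)=\{y\in[C]: s_\lambda(x,y)\le\hat q_\lambda\}$. Let $\mathcal{Y}_1(x):=\{y\in[C]: d(y,\hat y(x))\neq 0\}$. Then for every $x$, $$\mathcal{C}_\lambda(x)\cap\mathcal{Y}_1(x)\subseteq \mathcal{C}(x)\cap \mathcal{Y}_1(x).$$
   Context: Classification with $C$ classes, labels in $[C]=\{1,\dots,C\}$. A classifier outputs a softmax vector $\hat\pi(x)\in\mathbb{R}^C$ and predicted class $\hat y(x)=\arg\max_i \hat\pi_i(x)$. A map $g:[C]\to[G]$ partitions the classes into $G$ groups. Define $d(y,y'):=\mathbb{I}\{g(y)\neq g(y')\}$. Given any real-valued score function $s(x,y)$ and $\lambda>0$, define the penalized score $s_\lambda(x,y):=s(x,y)+\lambda\, d(y,\hat y(x))$. Given a calibration set $\{(x_i,y_i)\}_{i=1}^n$ and $\alpha\in(0,1)$ with $\lceil (n+1)(1-\alpha)\rceil\le n$, $\hat q$ (resp. $\hat q_\lambda$) is the $\lceil (n+1)(1-\alpha)\rceil$-th smallest value of $\{s(x_i,y_i)\}_{i=1}^n$ (resp. $\{s_\lambda(x_i,y_i)\}_{i=1}^n$). *)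

theory Defs
  imports Complex_Main
begin

text \<open>Classes are the naturals 1..C. The predicted class is an argmax of the softmax vector
  over [C] (ties broken by Hilbert choice).\<close>
definition pred_class :: "nat \<Rightarrow> ('x \<Rightarrow> nat \<Rightarrow> real) \<Rightarrow> 'x \<Rightarrow> nat" where
  "pred_class C phat x = (SOME i. i \<in> {1..C} \<and> (\<forall>j\<in>{1..C}. phat x j \<le> phat x i))"

definition grp_dist :: "(nat \<Rightarrow> nat) \<Rightarrow> nat \<Rightarrow> nat \<Rightarrow> real" where
  "grp_dist g y y' = (if g y \<noteq> g y' then 1 else 0)"

definition pen_score ::
  "nat \<Rightarrow> ('x \<Rightarrow> nat \<Rightarrow> real) \<Rightarrow> (nat \<Rightarrow> nat) \<Rightarrow> ('x \<Rightarrow> nat \<Rightarrow> real) \<Rightarrow> real \<Rightarrow> 'x \<Rightarrow> nat \<Rightarrow> real" where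
  "pen_score C phat g s lam x y = s x y + lam * grp_dist g y (pred_class C phat x)"

text \<open>k-th smallest (1-based, counted with multiplicity) of the values v 1, ..., v n.\<close>
definition kth_smallest :: "nat \<Rightarrow> nat \<Rightarrow> (nat \<Rightarrow> real) \<Rightarrow> real" where
  "kth_smallest k n v = sort (map v [1..<n+1]) ! (k - 1)"

definition conf_rank :: "nat \<Rightarrow> real \<Rightarrow> nat" where
  "conf_rank n \<alpha> = nat \<lceil>(real n + 1) * (1 - \<alpha>)\<rceil>"

end

theory Submission
  imports Defs "HOL-Library.Multiset"
begin

text \<open>Since \<open>d\<close> takes only the values 0 and 1, the penalized score exceeds the plain score
  by at most \<open>\<lambda>\<close> at every calibration point; order statistics are monotone under pointwise
  domination, so \<open>q\<^sub>\<lambda> \<le> q + \<lambda>\<close>. On \<open>Y\<^sub>1(x)\<close> the penalty is exactly \<open>\<lambda>\<close>, hence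
  \<open>s(x,y) + \<lambda> \<le> q\<^sub>\<lambda> \<le> q + \<lambda>\<close> there.\<close>

lemma length_filter_map_mono:
  assumes "\<And>i. i \<in> set l \<Longrightarrow> P (f i) \<Longrightarrow> Q (g i)"
  shows "length (filter P (map f l)) \<le> length (filter Q (map g l))"
  using assms by (induction l) auto

lemma length_filter_sort: "length (filter P (sort xs)) = length (filter P xs)"
  by (metis mset_filter mset_sort size_mset)

lemma length_filter_take_drop:
  "length (filter P xs) = length (filter P (take k xs)) + length (filter P (drop k xs))"
  by (metis append_take_drop_id filter_append length_append)

lemma sorted_nth_le_iff_length_filter:
  fixes xs :: "'a::linorder list"
  assumes "sorted xs" and "k < length xs"
  shows "xs ! k \<le> t \<longleftrightarrow> Suc k \<le> length (filter (\<lambda>z. z \<le> t) xs)"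
proof
  assume "xs ! k \<le> t"
  have "filter (\<lambda>z. z \<le> t) (take (Suc k) xs) = take (Suc k) xs"
  proof (rule filter_True, rule ballI)
    fix z assume "z \<in> set (take (Suc k) xs)"
    then obtain i where "i < Suc k" "z = xs ! i"
      using assms(2) by (auto simp: in_set_conv_nth)
    then show "z \<le> t"
      using sorted_nth_mono[OF assms(1), of i k] assms(2) \<open>xs ! k \<le> t\<close> by simp
  qed
  then show "Suc k \<le> length (filter (\<lambda>z. z \<le> t) xs)"
    using length_filter_take_drop[of "\<lambda>z. z \<le> t" xs "Suc k"] assms(2) by simp
next
  assume count: "Suc k \<le> length (filter (\<lambda>z. z \<le> t) xs)"
  show "xs ! k \<le> t"
  proof (rule ccontr)
    assume "\<not> xs ! k \<le> t"
    have "filter (\<lambda>z. z \<le> t) (drop k xs) = []"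
    proof (rule filter_False, rule ballI)
      fix z assume "z \<in> set (drop k xs)"
      then obtain j where "j < length xs - k" "z = xs ! (k + j)"
        by (auto simp: in_set_conv_nth)
      then have "xs ! k \<le> z"
        using sorted_nth_mono[OF assms(1), of k "k + j"] by simp
      then show "\<not> z \<le> t"
        using \<open>\<not> xs ! k \<le> t\<close> order_trans by blast
    qed
    then have "length (filter (\<lambda>z. z \<le> t) xs) \<le> k"
      using length_filter_take_drop[of "\<lambda>z. z \<le> t" xs k]
        length_filter_le[of "\<lambda>z. z \<le> t" "take k xs"] by simp
    with count show False by simp
  qed
qed

lemma sort_nth_le_iff_length_filter:
  fixes xs :: "'a::linorder list"
  assumes "k < length xs"
  shows "sort xs ! k \<le> t \<longleftrightarrow> Suc k \<le> length (filter (\<lambda>z. z \<le> t) xs)"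
  using sorted_nth_le_iff_length_filter[of "sort xs" k t] assms
  by (simp add: length_filter_sort)

lemma sort_map_nth_le_add:
  fixes v w :: "'i \<Rightarrow> 'a::linordered_ab_semigroup_add"
  assumes "\<And>i. i \<in> set l \<Longrightarrow> v i \<le> w i + c" and "k < length l"
  shows "sort (map v l) ! k \<le> sort (map w l) ! k + c"
proof -
  let ?t = "sort (map w l) ! k"
  have "Suc k \<le> length (filter (\<lambda>z. z \<le> ?t) (map w l))"
    using sort_nth_le_iff_length_filter[of k "map w l" ?t] assms(2) by simp
  also have "\<dots> \<le> length (filter (\<lambda>z. z \<le> ?t + c) (map v l))"
    using assms(1) by (intro length_filter_map_mono) (meson add_right_mono order_trans)
  finally show ?thesis
    using assms(2) by (simp add: sort_nth_le_iff_length_filter)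
qed

lemma kth_smallest_le_add:
  assumes "\<And>i. i \<in> {1..n} \<Longrightarrow> v i \<le> w i + c" and "1 \<le> k" and "k \<le> n"
  shows "kth_smallest k n v \<le> kth_smallest k n w + c"
  unfolding kth_smallest_def
  using assms by (intro sort_map_nth_le_add) auto

lemma conf_rank_ge_one:
  assumes "\<alpha> < 1"
  shows "1 \<le> conf_rank n \<alpha>"
proof -
  have "0 < (real n + 1) * (1 - \<alpha>)"
    using assms by simp
  then show ?thesis
    unfolding conf_rank_def by linarith
qed

lemma grp_dist_cases: "grp_dist g y y' = 0 \<or> grp_dist g y y' = 1"
  by (simp add: grp_dist_def)

lemma pen_score_le_add:
  assumes "0 \<le> lam"
  shows "pen_score C phat g s lam x y \<le> s x y + lam"
  using grp_dist_cases[of g y "pred_class C phat x"] assms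
  by (auto simp: pen_score_def)

lemma pen_score_eq_add:
  assumes "grp_dist g y (pred_class C phat x) \<noteq> 0"
  shows "pen_score C phat g s lam x y = s x y + lam"
  using grp_dist_cases[of g y "pred_class C phat x"] assms
  by (auto simp: pen_score_def)

theorem proposition1:
  fixes C G n :: nat and phat :: "'x \<Rightarrow> nat \<Rightarrow> real" and g :: "nat \<Rightarrow> nat"
    and s :: "'x \<Rightarrow> nat \<Rightarrow> real" and lam \<alpha> :: real
    and xs :: "nat \<Rightarrow> 'x" and ys :: "nat \<Rightarrow> nat" and x :: 'x
  assumes "C \<ge> 1"
    and "\<forall>z. (\<forall>i\<in>{1..C}. phat z i \<ge> 0) \<and> (\<Sum>i\<in>{1..C}. phat z i) = 1"
    and "\<forall>y\<in>{1..C}. g y \<in> {1..G}"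
    and "\<forall>i\<in>{1..n}. ys i \<in> {1..C}"
    and "lam > 0" and "0 < \<alpha>" and "\<alpha> < 1"
    and "conf_rank n \<alpha> \<le> n"
  shows "{y \<in> {1..C}. pen_score C phat g s lam x y
              \<le> kth_smallest (conf_rank n \<alpha>) n (\<lambda>i. pen_score C phat g s lam (xs i) (ys i))}
           \<inter> {y \<in> {1..C}. grp_dist g y (pred_class C phat x) \<noteq> 0}
         \<subseteq> {y \<in> {1..C}. s x y \<le> kth_smallest (conf_rank n \<alpha>) n (\<lambda>i. s (xs i) (ys i))}
           \<inter> {y \<in> {1..C}. grp_dist g y (pred_class C phat x) \<noteq> 0}"
proof -
  let ?k = "conf_rank n \<alpha>"
  have quantiles: "kth_smallest ?k n (\<lambda>i. pen_score C phat g s lam (xs i) (ys i))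
      \<le> kth_smallest ?k n (\<lambda>i. s (xs i) (ys i)) + lam"
    using \<open>lam > 0\<close> \<open>\<alpha> < 1\<close> \<open>?k \<le> n\<close>
    by (intro kth_smallest_le_add pen_score_le_add conf_rank_ge_one) auto
  show ?thesis
    using quantiles pen_score_eq_add[of g _ C phat x s lam] by fastforce
qed

end
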